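(* For a positive integer $k$, let $N(k)$ be the maximum length $N$ of an $\mathbb{R}$-Sidon sequence $(m_n)_{n=1}^N$ with all elements in $[1,k]$. Then $$\limsup_{k\to\infty}\frac{N(k)}{\sqrt{k}}\le 1.$$
   Context: A finite sequence of real numbers $(m_n)_{n=1}^N$ is an $\mathbb{R}$-Sidon sequence if $|(m_{n_1}+m_{n_2})-(m_n+m_{n_3})|\ge1$ for all $n_1,n_2,n,n_3\in\{1,\ldots,N\}$ with $(n_1,n_2)\ne(n,n_3)$ and $(n_1,n_2)\ne(n_3,n)$. *)

theory Defs
  imports "HOL-Analysis.Analysis"
begin

definition R_Sidon :: "(nat \<Rightarrow> real) \<Rightarrow> nat \<Rightarrow> bool" where
  "R_Sidon m N \<longleftrightarrow>
     (\<forall>n1\<in>{1..N}. \<forall>n2\<in>{1..N}. \<forall>n\<in>{1..N}. \<forall>n3\<in>{1..N}.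
        (n1, n2) \<noteq> (n, n3) \<and> (n1, n2) \<noteq> (n3, n) \<longrightarrow>
        \<bar>(m n1 + m n2) - (m n + m n3)\<bar> \<ge> 1)"

definition Nmax :: "nat \<Rightarrow> nat" where
  "Nmax k = Max {N. \<exists>m. R_Sidon m N \<and> (\<forall>i\<in>{1..N}. m i \<in> {1..real k})}"

end

theory Submission
  imports Defs "HOL-Real_Asymp.Real_Asymp"
begin

text \<open>Slide the integer windows \<open>[t, t + u - 1]\<close>, \<open>1 - u \<le> t \<le> k\<close>, over the integer parts of the
  \<open>m\<^sub>i\<close>. Every index lies in exactly \<open>u\<close> windows, so the window sizes add up to \<open>u N\<close>. A window
  together with an ordered pair \<open>i \<noteq> j\<close> of indices in it is determined by the position of
  \<open>\<lfloor>m\<^sub>i\<rfloor>\<close> in the window and by \<open>\<lfloor>m\<^sub>i - m\<^sub>j\<rfloor>\<close>, because two pairs with equal floor differences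
  would violate the Sidon condition; hence there are at most \<open>u (u + 1)\<close> such configurations.
  Cauchy--Schwarz over the \<open>k + u\<close> windows gives \<open>(u N)\<^sup>2 \<le> (u N + u (u + 1)) (k + u)\<close>, and
  \<open>u \<approx> c \<surd>k\<close> yields \<open>N(k) / \<surd>k \<le> 1 + 1/c + o(1)\<close> for every \<open>c > 0\<close>.\<close>

lemma floor_diff_bounds:
  fixes a b :: real
  shows "\<lfloor>a - b\<rfloor> \<le> \<lfloor>a\<rfloor> - \<lfloor>b\<rfloor>" "\<lfloor>a\<rfloor> - \<lfloor>b\<rfloor> \<le> \<lfloor>a - b\<rfloor> + 1"
proof -
  have "\<lfloor>a - b\<rfloor> + \<lfloor>b\<rfloor> \<le> \<lfloor>a\<rfloor>"
    unfolding le_floor_iff by (simp; linarith)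
  then show "\<lfloor>a - b\<rfloor> \<le> \<lfloor>a\<rfloor> - \<lfloor>b\<rfloor>" by simp
  have "\<lfloor>a\<rfloor> - \<lfloor>b\<rfloor> - 1 \<le> \<lfloor>a - b\<rfloor>"
    unfolding le_floor_iff by (simp; linarith)
  then show "\<lfloor>a\<rfloor> - \<lfloor>b\<rfloor> \<le> \<lfloor>a - b\<rfloor> + 1" by simp
qed

lemma floor_eq_imp_dist_less_one:
  fixes x y :: real
  assumes "\<lfloor>x\<rfloor> = \<lfloor>y\<rfloor>"
  shows "\<bar>x - y\<bar> < 1"
  using assms floor_eq_iff[of x "\<lfloor>y\<rfloor>"] floor_eq_iff[of y "\<lfloor>y\<rfloor>"] by linarith

lemma R_Sidon_diff_close_imp_eq:
  assumes "R_Sidon m N" and "i \<in> {1..N}" "j \<in> {1..N}" "i' \<in> {1..N}" "j' \<in> {1..N}"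
    and "i \<noteq> j" and close: "\<bar>(m i - m j) - (m i' - m j')\<bar> < 1"
  shows "i = i' \<and> j = j'"
proof -
  have "(i, j') \<noteq> (i', j) \<and> (i, j') \<noteq> (j, i') \<longrightarrow> \<bar>(m i + m j') - (m i' + m j)\<bar> \<ge> 1"
    using assms(1-5) unfolding R_Sidon_def by blast
  moreover have "\<bar>(m i + m j') - (m i' + m j)\<bar> < 1"
    using close by (simp add: algebra_simps)
  ultimately have "(i, j') = (i', j) \<or> (i, j') = (j, i')" by linarith
  with \<open>i \<noteq> j\<close> show ?thesis by auto
qed

definition window :: "('a \<Rightarrow> int) \<Rightarrow> 'a set \<Rightarrow> nat \<Rightarrow> int \<Rightarrow> 'a set" where
  "window f I u t = {i \<in> I. t \<le> f i \<and> f i \<le> t + int u - 1}"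

definition off_diagonal :: "'a set \<Rightarrow> ('a \<times> 'a) set" where
  "off_diagonal A = {p \<in> A \<times> A. fst p \<noteq> snd p}"

lemma finite_window [simp]: "finite I \<Longrightarrow> finite (window f I u t)"
  by (simp add: window_def)

lemma card_square_eq_card_plus_off_diagonal:
  assumes "finite A"
  shows "card A ^ 2 = card A + card (off_diagonal A)"
proof -
  have "A \<times> A = (\<lambda>i. (i, i)) ` A \<union> off_diagonal A"
    and "(\<lambda>i. (i, i)) ` A \<inter> off_diagonal A = {}"
    by (auto simp: off_diagonal_def)
  moreover have "finite (off_diagonal A)"
    using assms by (simp add: off_diagonal_def)
  moreover have "card ((\<lambda>i. (i, i)) ` A) = card A"
    by (simp add: card_image inj_on_def)
  ultimately have "card (A \<times> A) = card A + card (off_diagonal A)"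
    using assms by (simp add: card_Un_disjoint)
  then show ?thesis
    by (simp add: power2_eq_square card_cartesian_product)
qed

lemma sum_card_window:
  assumes "finite I" and range: "\<And>i. i \<in> I \<Longrightarrow> 1 \<le> f i \<and> f i \<le> int k"
  shows "(\<Sum>t\<in>{1 - int u..int k}. card (window f I u t)) = u * card I"
proof -
  have "(\<Sum>t\<in>{1 - int u..int k}. card (window f I u t))
      = (\<Sum>t\<in>{1 - int u..int k}. \<Sum>i\<in>I. if t \<le> f i \<and> f i \<le> t + int u - 1 then 1 else 0)"
    using \<open>finite I\<close> by (simp add: window_def sum.inter_filter[symmetric])
  also have "\<dots> = (\<Sum>i\<in>I. \<Sum>t\<in>{1 - int u..int k}. if t \<le> f i \<and> f i \<le> t + int u - 1 then 1 else 0)"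
    by (rule sum.swap)
  also have "\<dots> = (\<Sum>i\<in>I. u)"
  proof (rule sum.cong[OF refl])
    fix i assume "i \<in> I"
    have "{t \<in> {1 - int u..int k}. t \<le> f i \<and> f i \<le> t + int u - 1} = {f i - int u + 1..f i}"
      using range[OF \<open>i \<in> I\<close>] by auto
    then show "(\<Sum>t\<in>{1 - int u..int k}. if t \<le> f i \<and> f i \<le> t + int u - 1 then 1 else 0) = u"
      by (simp add: sum.inter_filter[symmetric])
  qed
  finally show ?thesis by simp
qed

lemma sum_card_off_diagonal_window_le:
  assumes S: "R_Sidon m N" and "finite T"
  shows "(\<Sum>t\<in>T. card (off_diagonal (window (\<lambda>i. \<lfloor>m i\<rfloor>) {1..N} u t))) \<le> u * (u + 1)"
proof -
  define f where "f = (\<lambda>i. \<lfloor>m i\<rfloor>)"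
  define D where "D t = off_diagonal (window f {1..N} u t)" for t
  define code where "code = (\<lambda>(t, i, j). (f i - t, \<lfloor>m i - m j\<rfloor>))"
  define C where "C = (SIGMA r:{0..int u - 1}. {r - int u..r})"
  have "card C = (\<Sum>r\<in>{0..int u - 1}. card {r - int u..r})"
    by (simp add: C_def)
  also have "\<dots> = (\<Sum>r\<in>{0..int u - 1}. u + 1)"
    by (intro sum.cong) auto
  also have "\<dots> = u * (u + 1)"
    by simp
  finally have card_C: "card C = u * (u + 1)" .
  have "code ` (SIGMA t:T. D t) \<subseteq> C"
  proof (rule image_subsetI, safe)
    fix t i j assume "t \<in> T" "(i, j) \<in> D t"
    then have "t \<le> f i" "f i \<le> t + int u - 1" "t \<le> f j" "f j \<le> t + int u - 1"
      by (auto simp: D_def off_diagonal_def window_def)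
    with floor_diff_bounds[of "m i" "m j"] show "code (t, i, j) \<in> C"
      by (auto simp: code_def C_def f_def)
  qed
  moreover have "inj_on code (SIGMA t:T. D t)"
  proof (rule inj_onI, clarsimp)
    fix t i j t' i' j'
    assume "(i, j) \<in> D t" "(i', j') \<in> D t'" "code (t, i, j) = code (t', i', j')"
    then have "i \<in> {1..N}" "j \<in> {1..N}" "i' \<in> {1..N}" "j' \<in> {1..N}" "i \<noteq> j"
      and offset: "f i - t = f i' - t'" and diff: "\<lfloor>m i - m j\<rfloor> = \<lfloor>m i' - m j'\<rfloor>"
      by (auto simp: D_def off_diagonal_def window_def code_def)
    with S floor_eq_imp_dist_less_one[OF diff] have "i = i' \<and> j = j'"
      by (intro R_Sidon_diff_close_imp_eq) auto
    with offset show "t = t' \<and> i = i' \<and> j = j'" by simp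
  qed
  ultimately have "card (SIGMA t:T. D t) \<le> card C"
    by (intro card_inj_on_le) (auto simp: C_def)
  moreover have "(\<Sum>t\<in>T. card (D t)) = card (SIGMA t:T. D t)"
    using \<open>finite T\<close> by (simp add: D_def off_diagonal_def)
  ultimately show ?thesis
    using card_C by (simp add: D_def f_def)
qed

lemma R_Sidon_window_inequality:
  assumes S: "R_Sidon m N" and range: "\<forall>i\<in>{1..N}. m i \<in> {1..real k}"
  shows "(u * N)\<^sup>2 \<le> (u * N + u * (u + 1)) * (k + u)"
proof -
  define f where "f = (\<lambda>i. \<lfloor>m i\<rfloor>)"
  define T where "T = {1 - int u..int k}"
  define W where "W = window f {1..N} u"
  have f_range: "1 \<le> f i \<and> f i \<le> int k" if "i \<in> {1..N}" for i
  proof -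
    have "1 \<le> m i" "m i \<le> real k"
      using range that by auto
    then show ?thesis
      by (auto simp: f_def le_floor_iff floor_le_iff)
  qed
  then have sum_W: "(\<Sum>t\<in>T. card (W t)) = u * N"
    using sum_card_window[of "{1..N}" f k u] by (simp add: T_def W_def)
  have "(\<Sum>t\<in>T. (card (W t))\<^sup>2) = u * N + (\<Sum>t\<in>T. card (off_diagonal (W t)))"
    unfolding sum_W [symmetric] sum.distrib [symmetric]
    by (simp add: W_def card_square_eq_card_plus_off_diagonal)
  also have "\<dots> \<le> u * N + u * (u + 1)"
    using sum_card_off_diagonal_window_le[OF S, of T u] by (simp add: W_def f_def T_def)
  finally have sum_squares: "(\<Sum>t\<in>T. (real (card (W t)))\<^sup>2) \<le> real (u * N + u * (u + 1))"
    by (simp only: of_nat_power [symmetric] of_nat_sum [symmetric] of_nat_le_iff)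
  have "real ((u * N)\<^sup>2) = (\<Sum>t\<in>T. real (card (W t)))\<^sup>2"
    by (simp flip: sum_W)
  also have "\<dots> \<le> (\<Sum>t\<in>T. (real (card (W t)))\<^sup>2) * card T"
    by (rule sum_squared_le_sum_of_squares)
  also have "\<dots> \<le> real (u * N + u * (u + 1)) * card T"
    using sum_squares by (rule mult_right_mono) simp
  also have "card T = k + u"
    by (simp add: T_def)
  finally show ?thesis
    by (simp only: of_nat_mult [symmetric] of_nat_le_iff)
qed

lemma R_Sidon_length_le:
  assumes "R_Sidon m N" "\<forall>i\<in>{1..N}. m i \<in> {1..real k}"
  shows "N \<le> 2 * k + 4"
proof (rule ccontr)
  assume "\<not> N \<le> 2 * k + 4"
  then have "N * (2 * k + 5) \<le> N * N"
    by simp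
  moreover have "N * N \<le> (N + 2) * (k + 1)"
    using R_Sidon_window_inequality[OF assms, of 1] by (simp add: power2_eq_square)
  ultimately show False
    using \<open>\<not> N \<le> 2 * k + 4\<close> by (simp add: algebra_simps)
qed

lemma Nmax_attained: "\<exists>m. R_Sidon m (Nmax k) \<and> (\<forall>i\<in>{1..Nmax k}. m i \<in> {1..real k})"
proof -
  define S where "S = {N. \<exists>m. R_Sidon m N \<and> (\<forall>i\<in>{1..N}. m i \<in> {1..real k})}"
  have "S \<subseteq> {..2 * k + 4}"
    using R_Sidon_length_le by (auto simp: S_def)
  then have "finite S"
    by (rule finite_subset) simp
  moreover have "0 \<in> S"
    by (auto simp: S_def R_Sidon_def)
  ultimately have "Max S \<in> S"
    by (intro Max_in) auto
  then show ?thesis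
    by (simp add: S_def Nmax_def)
qed

lemma le_add_sqrt_if_square_le_linear:
  fixes x a b :: real
  assumes "a \<ge> 0" "b \<ge> 0" "x\<^sup>2 \<le> a * x + b"
  shows "x \<le> a + sqrt b"
proof (rule ccontr)
  assume "\<not> x \<le> a + sqrt b"
  then have x: "x > a + sqrt b"
    by simp
  have "sqrt b \<ge> 0"
    using assms by simp
  with x assms have "x > 0"
    by linarith
  with x have "x * x > (a + sqrt b) * x"
    by (rule mult_strict_right_mono)
  moreover have "sqrt b * x \<ge> sqrt b * sqrt b"
    using \<open>sqrt b \<ge> 0\<close> x assms by (intro mult_left_mono) auto
  moreover have "sqrt b * sqrt b = b"
    using assms by simp
  ultimately show False
    using assms by (simp add: power2_eq_square algebra_simps)
qed

lemma Nmax_le_window_root: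
  assumes "u > 0"
  shows "real (Nmax k) \<le> (real k + real u) / real u + sqrt ((real k + real u) * (real u + 1) / real u)"
    (is "_ \<le> ?a + sqrt ?b")
proof -
  obtain m where "R_Sidon m (Nmax k)" "\<forall>i\<in>{1..Nmax k}. m i \<in> {1..real k}"
    using Nmax_attained by blast
  then have "real ((u * Nmax k)\<^sup>2) \<le> real ((u * Nmax k + u * (u + 1)) * (k + u))"
    by (simp only: of_nat_le_iff R_Sidon_window_inequality)
  also have "\<dots> = (real u)\<^sup>2 * (?a * real (Nmax k) + ?b)"
    using assms by (simp add: power2_eq_square field_simps)
  finally have "(real (Nmax k))\<^sup>2 \<le> ?a * real (Nmax k) + ?b"
    using assms by (simp add: power_mult_distrib)
  then show ?thesis
    by (intro le_add_sqrt_if_square_le_linear) auto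
qed

text \<open>The bound of \<open>Nmax_le_window_root\<close> for \<open>u = \<lceil>c \<surd>x\<rceil>\<close>, divided by \<open>\<surd>x\<close>, after
  estimating \<open>c \<surd>x \<le> u \<le> c \<surd>x + 1\<close>.\<close>
definition window_majorant :: "real \<Rightarrow> real \<Rightarrow> real" where
  "window_majorant c x = 1 / c + 1 / sqrt x + sqrt ((1 + (c * sqrt x + 1) / x) * (1 + 1 / (c * sqrt x)))"

lemma window_majorant_tendsto:
  assumes "c > 0"
  shows "((\<lambda>k::nat. window_majorant c (real k)) \<longlongrightarrow> 1 / c + 1) sequentially"
  unfolding window_majorant_def using assms by real_asymp

lemma Nmax_div_sqrt_le_window_majorant:
  assumes "k \<ge> 1" and "c > 0"
  shows "real (Nmax k) / sqrt (real k) \<le> window_majorant c (real k)"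
proof -
  define K where "K = real k"
  define s where "s = sqrt K"
  define u where "u = nat \<lceil>c * s\<rceil>"
  define U where "U = real u"
  have "K \<ge> 1" "s > 0" "s * s = K"
    using assms by (simp_all add: K_def s_def)
  have "c * s > 0"
    using \<open>c > 0\<close> \<open>s > 0\<close> by simp
  then have U_eq: "U = of_int \<lceil>c * s\<rceil>"
    by (simp add: U_def u_def)
  have "c * s \<le> U" "U \<le> c * s + 1"
    unfolding U_eq by (simp_all add: ceiling_correct less_imp_le)
  then have "U > 0"
    using \<open>c * s > 0\<close> by linarith
  have "real (Nmax k) / s \<le> ((K + U) / U + sqrt ((K + U) * (U + 1) / U)) / s"
    using Nmax_le_window_root[of u k] \<open>U > 0\<close> \<open>s > 0\<close>
    by (simp add: divide_right_mono U_def K_def)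
  also have "\<dots> = (s * s + U) / (U * s) + sqrt ((K + U) * (U + 1) / U / K)"
    unfolding add_divide_distrib \<open>s * s = K\<close>
    by (simp add: s_def real_sqrt_divide real_sqrt_mult mult.commute)
  also have "(s * s + U) / (U * s) = s / U + 1 / s"
    using \<open>s > 0\<close> \<open>U > 0\<close> by (simp add: field_simps)
  also have "(K + U) * (U + 1) / U / K = (1 + U / K) * (1 + 1 / U)"
    using \<open>U > 0\<close> \<open>K \<ge> 1\<close> by (simp add: field_simps)
  also have "s / U \<le> 1 / c"
    using \<open>s > 0\<close> \<open>c * s > 0\<close> \<open>c * s \<le> U\<close> divide_left_mono[of "c * s" U s] by simp
  also have "(1 + U / K) * (1 + 1 / U) \<le> (1 + (c * s + 1) / K) * (1 + 1 / (c * s))"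
    using \<open>U \<le> c * s + 1\<close> \<open>c * s \<le> U\<close> \<open>K \<ge> 1\<close> \<open>c * s > 0\<close>
    by (intro mult_mono add_left_mono divide_right_mono frac_le) auto
  finally show ?thesis
    by (simp add: window_majorant_def s_def K_def)
qed

theorem lemma3:
  shows "limsup (\<lambda>k::nat. ereal (real (Nmax k) / sqrt (real k))) \<le> 1"
proof (rule ereal_le_epsilon2)
  fix e :: real
  assume "e > 0"
  then have "1 / e > 0"
    by simp
  have "limsup (\<lambda>k::nat. ereal (real (Nmax k) / sqrt (real k)))
      \<le> limsup (\<lambda>k. ereal (window_majorant (1 / e) (real k)))"
    using eventually_ge_at_top[of "1::nat"]
    by (intro Limsup_mono, eventually_elim)
      (auto intro: Nmax_div_sqrt_le_window_majorant \<open>1 / e > 0\<close>)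
  also have "\<dots> = ereal (1 / (1 / e) + 1)"
    using window_majorant_tendsto[OF \<open>1 / e > 0\<close>]
    by (intro lim_imp_Limsup tendsto_ereal) simp_all
  also have "\<dots> = 1 + ereal e"
    by simp
  finally show "limsup (\<lambda>k::nat. ereal (real (Nmax k) / sqrt (real k))) \<le> 1 + ereal e" .
qed

end
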